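(* Let $S$ be a set of mutually orthogonal genuinely entangled pure states of three qubits, $\mathbb{C}^2\otimes\mathbb{C}^2\otimes\mathbb{C}^2$, that spans a proper subspace such that, for every bipartition of the three qubits, the orthogonal complement of the span of $S$ contains no pure state entangled with respect to that bipartition. Then $|S|\in\{6,7\}$, and both cardinalities $6$ and $7$ occur for such sets.
   Context: The bipartitions of three qubits $A,B,C$ are $A|BC$, $B|AC$, $C|AB$. A pure three-qubit state is genuinely entangled if it is not a product state with respect to any of these bipartitions; it is fully separable if it is of the form $|a\rangle|b\rangle|c\rangle$. Such a set $S$ is called a three-qubit unextendible entangled basis that is unextendible across every bipartition. *)

theory Defs
  imports Complex_Main
begin

text \<open>Three-qubit state vectors in C^2 (x) C^2 (x) C^2, as amplitude functions
  indexed by the computational basis (qubit values False/True for A, B, C).\<close>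
type_synonym qstate = "bool \<Rightarrow> bool \<Rightarrow> bool \<Rightarrow> complex"

definition hinner :: "qstate \<Rightarrow> qstate \<Rightarrow> complex" where
  "hinner u v = (\<Sum>i\<in>UNIV. \<Sum>j\<in>UNIV. \<Sum>k\<in>UNIV. cnj (u i j k) * v i j k)"

definition pure_state :: "qstate \<Rightarrow> bool" where
  "pure_state v \<longleftrightarrow> hinner v v = 1"

definition cspan :: "qstate set \<Rightarrow> qstate set" where
  "cspan S = {v. \<exists>T c. finite T \<and> T \<subseteq> S \<and>
                    v = (\<lambda>i j k. \<Sum>s\<in>T. c s * s i j k)}"

definition orth_compl :: "qstate set \<Rightarrow> qstate set" where
  "orth_compl W = {v. \<forall>w\<in>W. hinner w v = 0}"

datatype bipartition = A_BC | B_AC | C_AB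

fun product_wrt :: "bipartition \<Rightarrow> qstate \<Rightarrow> bool" where
  "product_wrt A_BC v = (\<exists>(a::bool \<Rightarrow> complex) b. \<forall>i j k. v i j k = a i * b j k)"
| "product_wrt B_AC v = (\<exists>(a::bool \<Rightarrow> complex) b. \<forall>i j k. v i j k = a j * b i k)"
| "product_wrt C_AB v = (\<exists>(a::bool \<Rightarrow> complex) b. \<forall>i j k. v i j k = a k * b i j)"

definition genuinely_entangled :: "qstate \<Rightarrow> bool" where
  "genuinely_entangled v \<longleftrightarrow> pure_state v \<and> (\<forall>p. \<not> product_wrt p v)"

definition UEB_every_bipartition :: "qstate set \<Rightarrow> bool" where
  "UEB_every_bipartition S \<longleftrightarrow>
     (\<forall>s\<in>S. genuinely_entangled s) \<and>
     (\<forall>s\<in>S. \<forall>t\<in>S. s \<noteq> t \<longrightarrow> hinner s t = 0) \<and>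
     cspan S \<noteq> UNIV \<and>
     (\<forall>p. \<forall>v\<in>orth_compl (cspan S). pure_state v \<longrightarrow> product_wrt p v)"

end

theory Submission
  imports Defs
begin

(*
  Let W be the orthogonal complement of span S. By hypothesis (and rescaling) every vector
  of W is a product across each of the three cuts. Flattening along a cut turns such a vector
  into a 2 x 4 matrix of rank at most one, and any three-dimensional space of 2 x m matrices
  of rank at most one consists of matrices a (x) B with a common column vector a. Using all
  three cuts, three orthonormal vectors of W would all be multiples of one a (x) b (x) c,
  which is absurd; hence dim W <= 2. As W is nonzero, |S| = 8 - dim W is 6 or 7.

  For the converse, seven (resp. six) mutually orthogonal genuinely entangled states with
  amplitudes in {0, 1/2, -1/2} that vanish on |000> (resp. on |000> and |001>) span exactly
  the complement of |000> (resp. of |000> and |001>), which consists of product states.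
*)

lemma hinner_expand: "hinner u v =
  cnj (u False False False) * v False False False + cnj (u False False True) * v False False True +
  cnj (u False True False) * v False True False + cnj (u False True True) * v False True True +
  cnj (u True False False) * v True False False + cnj (u True False True) * v True False True +
  cnj (u True True False) * v True True False + cnj (u True True True) * v True True True"
  by (simp add: hinner_def UNIV_bool algebra_simps)

lemma hinner_commute: "hinner v u = cnj (hinner u v)"
  by (simp add: hinner_expand)

lemma hinner_sum_right:
  "hinner u (\<lambda>i j k. \<Sum>s\<in>T. c s * s i j k) = (\<Sum>s\<in>T. c s * hinner u s)"
  by (simp add: hinner_expand sum_distrib_left sum.distrib algebra_simps)

lemma hinner_sum_left:
  "hinner (\<lambda>i j k. \<Sum>s\<in>T. c s * s i j k) v = (\<Sum>s\<in>T. cnj (c s) * hinner s v)"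
  by (simp add: hinner_expand sum_distrib_left sum.distrib algebra_simps)

lemma hinner_diff_right: "hinner w (\<lambda>i j k. x i j k - y i j k) = hinner w x - hinner w y"
  by (simp add: hinner_expand algebra_simps)

lemma hinner_diff_left: "hinner (\<lambda>i j k. x i j k - y i j k) w = hinner x w - hinner y w"
  by (simp add: hinner_expand algebra_simps)

lemma hinner_scale_right: "hinner w (\<lambda>i j k. c * x i j k) = c * hinner w x"
  by (simp add: hinner_expand algebra_simps)

lemma hinner_scale_left: "hinner (\<lambda>i j k. c * x i j k) w = cnj c * hinner x w"
  by (simp add: hinner_expand algebra_simps)

lemma hinner_lincomb3_right:
  "hinner w (\<lambda>i j k. \<alpha> * x i j k + \<beta> * y i j k + \<gamma> * z i j k) =
     \<alpha> * hinner w x + \<beta> * hinner w y + \<gamma> * hinner w z"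
  by (simp add: hinner_expand algebra_simps)

definition sq_norm :: "qstate \<Rightarrow> real" where
  "sq_norm v = (\<Sum>i\<in>UNIV. \<Sum>j\<in>UNIV. \<Sum>k\<in>UNIV. (cmod (v i j k))\<^sup>2)"

lemma hinner_self_eq_sq_norm: "hinner v v = of_real (sq_norm v)"
proof -
  have "cnj z * z = of_real ((cmod z)\<^sup>2)" for z
    by (metis complex_norm_square mult.commute)
  then show ?thesis
    by (simp add: hinner_def sq_norm_def)
qed

lemma sq_norm_nonneg: "sq_norm v \<ge> 0"
  unfolding sq_norm_def by (intro sum_nonneg) auto

lemma sq_norm_eq_0_iff: "sq_norm v = 0 \<longleftrightarrow> v = (\<lambda>i j k. 0)"
  by (auto simp: sq_norm_def UNIV_bool add_nonneg_eq_0_iff fun_eq_iff all_bool_eq)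

definition ket :: "bool \<Rightarrow> bool \<Rightarrow> bool \<Rightarrow> qstate" where
  "ket a b c = (\<lambda>i j k. if i = a \<and> j = b \<and> k = c then 1 else 0)"

lemma hinner_ket_left: "hinner (ket a b c) v = v a b c"
  by (cases a; cases b; cases c) (simp_all add: hinner_expand ket_def)

lemma hinner_ket_right: "hinner v (ket a b c) = cnj (v a b c)"
  by (simp add: hinner_commute[of v] hinner_ket_left)

lemma hinner_ket_ket: "hinner (ket a b c) (ket a' b' c') = (if (a, b, c) = (a', b', c') then 1 else 0)"
  unfolding hinner_ket_left by (simp add: ket_def)

lemma ket_eq_iff: "ket a b c = ket a' b' c' \<longleftrightarrow> (a, b, c) = (a', b', c')"
proof
  assume "ket a b c = ket a' b' c'"
  then have "hinner (ket a b c) (ket a' b' c') = 1"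
    using hinner_ket_ket[of a b c a b c] by simp
  then show "(a, b, c) = (a', b', c')"
    unfolding hinner_ket_ket by (metis zero_neq_one)
qed simp

section \<open>Orthonormal sets\<close>

definition orthonormal :: "qstate set \<Rightarrow> bool" where
  "orthonormal T \<longleftrightarrow>
     (\<forall>s\<in>T. hinner s s = 1) \<and> (\<forall>s\<in>T. \<forall>t\<in>T. s \<noteq> t \<longrightarrow> hinner s t = 0)"

lemma orthonormal_subset: "orthonormal S \<Longrightarrow> T \<subseteq> S \<Longrightarrow> orthonormal T"
  unfolding orthonormal_def by blast

lemma orthonormal_insert:
  assumes "orthonormal S" "hinner u u = 1" "\<forall>s\<in>S. hinner s u = 0"
  shows "orthonormal (insert u S)"
proof -
  have "\<forall>s\<in>S. hinner u s = 0"
    using assms(3) hinner_commute[of u] by simp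
  then show ?thesis
    using assms unfolding orthonormal_def by auto
qed

lemma distinct_orthonormal_list:
  assumes "\<forall>s\<in>set xs. hinner s s = 1" "sorted_wrt (\<lambda>s t. hinner s t = 0) xs"
  shows "distinct xs \<and> orthonormal (set xs)"
  using assms
proof (induction xs)
  case Nil
  then show ?case
    by (simp add: orthonormal_def)
next
  case (Cons x xs)
  have xt: "hinner x t = 0" if "t \<in> set xs" for t
    using Cons.prems(2) that by simp
  have tx: "\<forall>t\<in>set xs. hinner t x = 0"
    using xt hinner_commute[of _ x] by (metis complex_cnj_zero)
  have IH: "distinct xs \<and> orthonormal (set xs)"
    using Cons by simp
  have "hinner x x = 1"
    using Cons.prems(1) by simp
  then have "x \<notin> set xs"
    using xt by fastforce
  moreover have "orthonormal (insert x (set xs))"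
    using orthonormal_insert[OF conjunct2[OF IH] \<open>hinner x x = 1\<close> tx] .
  ultimately show ?case
    using IH by simp
qed

lemma hinner_orthonormal_sum:
  assumes "orthonormal T" "finite T" "s \<in> T"
  shows "hinner s (\<lambda>i j k. \<Sum>t\<in>T. c t * t i j k) = c s"
proof -
  have "hinner s (\<lambda>i j k. \<Sum>t\<in>T. c t * t i j k) = c s * hinner s s + (\<Sum>t\<in>T - {s}. c t * hinner s t)"
    unfolding hinner_sum_right using assms by (simp add: sum.remove)
  also have "(\<Sum>t\<in>T - {s}. c t * hinner s t) = 0"
    using assms unfolding orthonormal_def by (intro sum.neutral) auto
  finally show ?thesis
    using assms unfolding orthonormal_def by simp
qed

definition residual :: "qstate set \<Rightarrow> qstate \<Rightarrow> qstate" where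
  "residual T v = (\<lambda>i j k. v i j k - (\<Sum>t\<in>T. hinner t v * t i j k))"

lemma hinner_residual:
  assumes "orthonormal T" "finite T" "s \<in> T"
  shows "hinner s (residual T v) = 0"
  unfolding residual_def hinner_diff_right hinner_orthonormal_sum[OF assms] by simp

lemma hinner_residual_self:
  assumes "orthonormal T" "finite T"
  shows "hinner (residual T v) (residual T v) = hinner v v - (\<Sum>t\<in>T. hinner t v * cnj (hinner t v))"
proof -
  have "hinner (\<lambda>i j k. \<Sum>t\<in>T. hinner t v * t i j k) (residual T v) = 0"
    unfolding hinner_sum_left using hinner_residual[OF assms] by simp
  then have "hinner (residual T v) (residual T v) = hinner v (residual T v)"
    by (subst (1) residual_def) (simp add: hinner_diff_left)
  also have "\<dots> = hinner v v - (\<Sum>t\<in>T. hinner t v * hinner v t)"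
    unfolding residual_def hinner_diff_right hinner_sum_right ..
  also have "(\<Sum>t\<in>T. hinner t v * hinner v t) = (\<Sum>t\<in>T. hinner t v * cnj (hinner t v))"
    by (metis hinner_commute)
  finally show ?thesis .
qed

text \<open>The squared residuals of the eight basis kets add up to the codimension of the span;
  the size bound, the existence of orthogonal unit vectors and completeness all come from
  this identity.\<close>

lemma sum_sq_norm_residual_ket:
  assumes "orthonormal T" "finite T"
  shows "(\<Sum>a\<in>UNIV. \<Sum>b\<in>UNIV. \<Sum>c\<in>UNIV. sq_norm (residual T (ket a b c))) = 8 - real (card T)"
proof -
  have res: "hinner (residual T (ket a b c)) (residual T (ket a b c)) =
          1 - (\<Sum>t\<in>T. cnj (t a b c) * t a b c)" for a b c
    unfolding hinner_residual_self[OF assms] hinner_ket_left hinner_ket_right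
    by (simp add: ket_def mult.commute)
  have "(\<Sum>a\<in>UNIV. \<Sum>b\<in>UNIV. \<Sum>c\<in>UNIV. 1 - (\<Sum>t\<in>T. cnj (t a b c) * t a b c))
      = 8 - (\<Sum>t\<in>T. hinner t t)"
    by (simp add: UNIV_bool hinner_expand sum.distrib algebra_simps)
  also have "(\<Sum>t\<in>T. hinner t t) = of_nat (card T)"
    using assms unfolding orthonormal_def by simp
  finally have "complex_of_real (\<Sum>a\<in>UNIV. \<Sum>b\<in>UNIV. \<Sum>c\<in>UNIV. sq_norm (residual T (ket a b c)))
      = complex_of_real (8 - real (card T))"
    unfolding of_real_sum hinner_self_eq_sq_norm[symmetric] res by simp
  then show ?thesis
    using of_real_eq_iff by blast
qed

lemma orthonormal_card_le_8:
  assumes "orthonormal T" "finite T"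
  shows "card T \<le> 8"
proof -
  have "0 \<le> (\<Sum>a\<in>UNIV. \<Sum>b\<in>UNIV. \<Sum>c\<in>UNIV. sq_norm (residual T (ket a b c)))"
    by (intro sum_nonneg) (simp add: sq_norm_nonneg)
  then show ?thesis
    using sum_sq_norm_residual_ket[OF assms] by simp
qed

lemma orthonormal_finite:
  assumes "orthonormal S"
  shows "finite S"
proof (rule ccontr)
  assume "infinite S"
  then obtain T where T: "finite T" "card T = 9" "T \<subseteq> S"
    using infinite_arbitrarily_large by blast
  have "card T \<le> 8"
    using orthonormal_card_le_8[OF orthonormal_subset[OF assms T(3)] T(1)] .
  then show False
    using T(2) by simp
qed

definition normalize_state :: "qstate \<Rightarrow> qstate" where
  "normalize_state w = (\<lambda>i j k. complex_of_real (1 / sqrt (sq_norm w)) * w i j k)"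

lemma hinner_normalize_state_self:
  assumes "w \<noteq> (\<lambda>i j k. 0)"
  shows "hinner (normalize_state w) (normalize_state w) = 1"
proof -
  have "sq_norm w > 0"
    using assms sq_norm_nonneg[of w] sq_norm_eq_0_iff[of w] by linarith
  then have "1 / sqrt (sq_norm w) * (1 / sqrt (sq_norm w) * sq_norm w) = 1"
    by (simp add: field_simps)
  then show ?thesis
    unfolding normalize_state_def hinner_scale_left hinner_scale_right hinner_self_eq_sq_norm
    by (metis Reals_of_real Reals_cnj_iff of_real_1 of_real_mult)
qed

lemma hinner_normalize_state_right: "hinner s (normalize_state w) = complex_of_real (1 / sqrt (sq_norm w)) * hinner s w"
  unfolding normalize_state_def by (rule hinner_scale_right)

lemma exists_unit_orthogonal:
  assumes "orthonormal T" "finite T" "card T < 8"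
  obtains u where "hinner u u = 1" "\<forall>s\<in>T. hinner s u = 0"
proof -
  obtain a b c where "sq_norm (residual T (ket a b c)) \<noteq> 0"
    using sum_sq_norm_residual_ket[OF assms(1,2)] assms(3) by fastforce
  then have "residual T (ket a b c) \<noteq> (\<lambda>i j k. 0)"
    by (simp add: sq_norm_eq_0_iff)
  then show ?thesis
    by (intro that[of "normalize_state (residual T (ket a b c))"] hinner_normalize_state_self ballI)
      (simp_all add: hinner_normalize_state_right hinner_residual[OF assms(1,2)])
qed

lemma orthonormal_expansion:
  assumes "orthonormal T" "finite T" "card T = 8"
  shows "v = (\<lambda>i j k. \<Sum>t\<in>T. hinner t v * t i j k)"
proof -
  have "(\<Sum>a\<in>UNIV. \<Sum>b\<in>UNIV. \<Sum>c\<in>UNIV. sq_norm (residual T (ket a b c))) = 0"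
    using sum_sq_norm_residual_ket[OF assms(1,2)] assms(3) by simp
  then have "\<forall>a b c. sq_norm (residual T (ket a b c)) = 0"
    by (simp add: UNIV_bool add_nonneg_eq_0_iff sq_norm_nonneg all_bool_eq)
  then have ket: "ket a b c = (\<lambda>i j k. \<Sum>t\<in>T. hinner t (ket a b c) * t i j k)" for a b c
    by (simp add: sq_norm_eq_0_iff residual_def fun_eq_iff)
  have "residual T v a b c = 0" for a b c
  proof -
    have "residual T v a b c = hinner (ket a b c) (residual T v)"
      by (simp add: hinner_ket_left)
    also have "\<dots> = 0"
      by (subst ket) (simp add: hinner_sum_left hinner_residual[OF assms(1,2)])
    finally show ?thesis .
  qed
  then show ?thesis
    by (simp add: residual_def fun_eq_iff)
qed

lemma orthonormal_extend_to_8: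
  assumes "orthonormal S" "finite S"
  obtains T where "S \<subseteq> T" "orthonormal T" "finite T" "card T = 8"
  using assms
proof (induction "8 - card S" arbitrary: S)
  case 0
  then have "card S = 8"
    using orthonormal_card_le_8[OF "0.prems"(2,3)] by linarith
  then show ?case
    using "0.prems" by blast
next
  case (Suc n)
  have "card S < 8"
    using Suc.hyps(2) by simp
  then obtain u where u: "hinner u u = 1" "\<forall>s\<in>S. hinner s u = 0"
    using exists_unit_orthogonal[OF Suc.prems(2,3)] by metis
  then have "u \<notin> S"
    by auto
  have "orthonormal (insert u S)"
    using orthonormal_insert[OF Suc.prems(2) u] .
  moreover have "n = 8 - card (insert u S)"
    using Suc.hyps(2) card_insert_disjoint[OF Suc.prems(3) \<open>u \<notin> S\<close>] by linarith
  ultimately show ?case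
    using Suc.hyps(1) Suc.prems by blast
qed

lemma in_cspan: "s \<in> S \<Longrightarrow> s \<in> cspan S"
  unfolding cspan_def by (intro CollectI exI[of _ "{s}"] exI[of _ "\<lambda>_. 1"]) simp

lemma orth_compl_cspan_iff: "w \<in> orth_compl (cspan S) \<longleftrightarrow> (\<forall>s\<in>S. hinner s w = 0)"
proof
  assume "w \<in> orth_compl (cspan S)"
  then show "\<forall>s\<in>S. hinner s w = 0"
    using in_cspan unfolding orth_compl_def by blast
next
  assume perp: "\<forall>s\<in>S. hinner s w = 0"
  have "hinner v w = 0" if "v \<in> cspan S" for v
  proof -
    obtain T c where "finite T" "T \<subseteq> S" "v = (\<lambda>i j k. \<Sum>s\<in>T. c s * s i j k)"
      using \<open>v \<in> cspan S\<close> unfolding cspan_def by blast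
    then show ?thesis
      using perp by (auto simp: hinner_sum_left intro!: sum.neutral)
  qed
  then show "w \<in> orth_compl (cspan S)"
    unfolding orth_compl_def by blast
qed

lemma cspan_subset_orth_compl_cspan:
  assumes "\<forall>s\<in>S. \<forall>u\<in>U. hinner s u = 0"
  shows "cspan U \<subseteq> orth_compl (cspan S)"
proof
  fix v
  assume "v \<in> cspan U"
  then obtain T c where T: "T \<subseteq> U" "v = (\<lambda>i j k. \<Sum>u\<in>T. c u * u i j k)"
    unfolding cspan_def by blast
  have "hinner s v = 0" if "s \<in> S" for s
    unfolding T(2) hinner_sum_right using assms that T(1) by (intro sum.neutral ballI) (simp add: subset_iff)
  then show "v \<in> orth_compl (cspan S)"
    unfolding orth_compl_cspan_iff by blast
qed

lemma cspan_eq_UNIV_iff_card_8: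
  assumes "orthonormal S" "finite S"
  shows "cspan S = UNIV \<longleftrightarrow> card S = 8"
proof
  assume span: "cspan S = UNIV"
  show "card S = 8"
  proof (rule ccontr)
    assume "card S \<noteq> 8"
    then have "card S < 8"
      using orthonormal_card_le_8[OF assms] by simp
    then obtain u where u: "hinner u u = 1" "\<forall>s\<in>S. hinner s u = 0"
      using exists_unit_orthogonal[OF assms] by metis
    then have "u \<in> orth_compl (cspan S)"
      unfolding orth_compl_cspan_iff by blast
    then have "hinner u u = 0"
      using span unfolding orth_compl_def by blast
    then show False
      using u(1) by simp
  qed
next
  assume "card S = 8"
  have "v \<in> cspan S" for v
    unfolding cspan_def
    using orthonormal_expansion[OF assms \<open>card S = 8\<close>, of v] assms(2)
    by (intro CollectI exI[of _ S] exI[of _ "\<lambda>t. hinner t v"]) simp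
  then show "cspan S = UNIV"
    by blast
qed

lemma orth_compl_vanishes_off_kets:
  fixes P :: "(bool \<times> bool \<times> bool) set"
  assumes on: "orthonormal S" and fin: "finite S" and card: "card S + card P = 8"
    and vanish: "P \<subseteq> {(a, b, c). \<forall>s\<in>S. s a b c = 0}"
    and v: "v \<in> orth_compl (cspan S)" and ijk: "(i, j, k) \<notin> P"
  shows "v i j k = 0"
proof -
  define K where "K = (\<lambda>(a, b, c). ket a b c) ` P"
  have "inj_on (\<lambda>(a, b, c). ket a b c) P"
    by (auto intro!: inj_onI simp: ket_eq_iff)
  moreover have "finite P"
    by (rule finite)
  ultimately have "finite K" "card K = card P"
    unfolding K_def by (simp_all add: card_image)
  have disj: "S \<inter> K = {}"
    using vanish unfolding K_def ket_def by (fastforce simp: fun_eq_iff)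
  have "orthonormal K"
    unfolding orthonormal_def K_def by (auto simp: hinner_ket_ket ket_eq_iff)
  moreover have "\<forall>s\<in>S. \<forall>t\<in>K. hinner s t = 0 \<and> hinner t s = 0"
    using vanish unfolding K_def by (auto simp: hinner_ket_left hinner_ket_right)
  ultimately have on_SK: "orthonormal (S \<union> K)"
    using on unfolding orthonormal_def ball_Un by blast
  have card_SK: "card (S \<union> K) = 8"
    using card disj fin \<open>finite K\<close> \<open>card K = card P\<close> by (simp add: card_Un_disjoint)
  have "v = (\<lambda>i j k. \<Sum>t\<in>S \<union> K. hinner t v * t i j k)"
    using fin \<open>finite K\<close> by (intro orthonormal_expansion[OF on_SK _ card_SK]) simp
  then have "v i j k = (\<Sum>t\<in>S \<union> K. hinner t v * t i j k)"
    by (rule fun_cong[OF fun_cong[OF fun_cong]])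
  also have "\<dots> = (\<Sum>t\<in>S. hinner t v * t i j k) + (\<Sum>t\<in>K. hinner t v * t i j k)"
    using fin \<open>finite K\<close> disj by (rule sum.union_disjoint)
  also have "\<dots> = 0"
    using v ijk unfolding orth_compl_cspan_iff K_def by (auto simp: ket_def intro!: sum.neutral)
  finally show ?thesis .
qed

section \<open>Spaces of 2 x m matrices of rank at most one\<close>

definition rank_le_one :: "('r \<Rightarrow> 'm \<Rightarrow> complex) \<Rightarrow> bool" where
  "rank_le_one M \<longleftrightarrow> (\<exists>a B. M = (\<lambda>i m. a i * B m))"

definition proportional :: "('a \<Rightarrow> complex) \<Rightarrow> ('a \<Rightarrow> complex) \<Rightarrow> bool" where
  "proportional f g \<longleftrightarrow> (\<forall>x y. f x * g y = f y * g x)"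

definition det2 :: "(bool \<Rightarrow> complex) \<Rightarrow> (bool \<Rightarrow> complex) \<Rightarrow> complex" where
  "det2 a b = a False * b True - a True * b False"

definition lin_indep3 ::
    "('r \<Rightarrow> 'm \<Rightarrow> complex) \<Rightarrow> ('r \<Rightarrow> 'm \<Rightarrow> complex) \<Rightarrow> ('r \<Rightarrow> 'm \<Rightarrow> complex) \<Rightarrow> bool"
  where "lin_indep3 X Y Z \<longleftrightarrow>
    (\<forall>\<alpha> \<beta> \<gamma>. (\<forall>i m. \<alpha> * X i m + \<beta> * Y i m + \<gamma> * Z i m = 0) \<longrightarrow> \<alpha> = 0 \<and> \<beta> = 0 \<and> \<gamma> = 0)"

definition minors_vanish :: "('r \<Rightarrow> 'm \<Rightarrow> complex) \<Rightarrow> bool" where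
  "minors_vanish M \<longleftrightarrow> (\<forall>r r' m m'. M r m * M r' m' = M r m' * M r' m)"

lemma rank_le_one_minors_vanish: "rank_le_one M \<Longrightarrow> minors_vanish M"
  unfolding rank_le_one_def minors_vanish_def by auto

lemma proportional_sym: "proportional f g \<Longrightarrow> proportional g f"
  unfolding proportional_def by (metis mult.commute)

lemma proportional_iff_det2: "proportional a b \<longleftrightarrow> det2 a b = 0"
  unfolding proportional_def det2_def all_bool_eq by (auto simp: algebra_simps)

lemma proportional_trans:
  assumes "proportional f g" "proportional g h" "g z \<noteq> 0"
  shows "proportional f h"
  unfolding proportional_def
proof (intro allI)
  fix x y
  have fg: "f x * g z = f z * g x" "f y * g z = f z * g y"
    using assms(1) unfolding proportional_def by blast+
  have gh: "g z * h y = g y * h z" "g z * h x = g x * h z"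
    using assms(2) unfolding proportional_def by blast+
  have "(f x * h y) * (g z * g z) = (f x * g z) * (g z * h y)"
    by (simp add: algebra_simps)
  also have "\<dots> = (f y * g z) * (g z * h x)"
    unfolding fg gh by (simp add: algebra_simps)
  also have "\<dots> = (f y * h x) * (g z * g z)"
    by (simp add: algebra_simps)
  finally show "f x * h y = f y * h x"
    using assms(3) by simp
qed

lemma proportional_scalar:
  assumes "proportional f g" "f z \<noteq> 0"
  shows "g = (\<lambda>x. g z / f z * f x)"
proof
  fix x
  have "f z * g x = f x * g z"
    using assms(1) unfolding proportional_def by metis
  then show "g x = g z / f z * f x"
    using assms(2) by (simp add: field_simps)
qed

lemma det2_cramer: "det2 c b * a i + det2 a c * b i = det2 a b * c i"
  by (cases i) (simp_all add: det2_def algebra_simps)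

text \<open>Cramer's rule: if \<open>a\<close> and \<open>a'\<close> are independent, the rows of
  \<open>a \<otimes> B + a' \<otimes> B'\<close> are invertible combinations of \<open>B\<close> and \<open>B'\<close>.\<close>

lemma rank_le_one_tensor_sum:
  fixes a a' :: "bool \<Rightarrow> complex"
  assumes "\<not> proportional a a'" "rank_le_one (\<lambda>i m. a i * B m + a' i * B' m)"
  shows "proportional B B'"
proof -
  obtain e F where eF: "\<And>i m. a i * B m + a' i * B' m = e i * F m"
    using assms(2) unfolding rank_le_one_def by (metis (no_types, lifting))
  define d where "d = det2 a a'"
  have d: "d \<noteq> 0"
    using assms(1) unfolding d_def proportional_iff_det2 .
  have B: "B m * d = det2 e a' * F m" for m
  proof -
    have "a' True * (a False * B m + a' False * B' m) - a' False * (a True * B m + a' True * B' m)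
        = a' True * (e False * F m) - a' False * (e True * F m)"
      by (simp add: eF)
    then show ?thesis
      unfolding d_def det2_def by (simp add: algebra_simps)
  qed
  have B': "B' m * d = det2 a e * F m" for m
  proof -
    have "a False * (a True * B m + a' True * B' m) - a True * (a False * B m + a' False * B' m)
        = a False * (e True * F m) - a True * (e False * F m)"
      by (simp add: eF)
    then show ?thesis
      unfolding d_def det2_def by (simp add: algebra_simps)
  qed
  have "B m * B' m' * (d * d) = B m' * B' m * (d * d)" for m m'
  proof -
    have "B m * B' m' * (d * d) = (B m * d) * (B' m' * d)"
      by (simp add: algebra_simps)
    also have "\<dots> = (B m' * d) * (B' m * d)"
      unfolding B B' by (simp add: algebra_simps)
    also have "\<dots> = B m' * B' m * (d * d)"
      by (simp add: algebra_simps)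
    finally show ?thesis .
  qed
  then show ?thesis
    unfolding proportional_def using d by simp
qed

lemma lin_indep3_nonzero:
  assumes "lin_indep3 X Y Z"
  shows "\<exists>i m. X i m \<noteq> 0" "\<exists>i m. Y i m \<noteq> 0" "\<exists>i m. Z i m \<noteq> 0"
  using assms[unfolded lin_indep3_def, rule_format, of 1 0 0]
    assms[unfolded lin_indep3_def, rule_format, of 0 1 0]
    assms[unfolded lin_indep3_def, rule_format, of 0 0 1]
  by auto

lemma lin_indep3_swap23: "lin_indep3 X Y Z \<Longrightarrow> lin_indep3 X Z Y"
  unfolding lin_indep3_def by (metis add.assoc add.commute)

text \<open>If \<open>a1\<close> and \<open>a2\<close> were independent, rank one of the pairwise sums would
  force \<open>B1, B2, B3\<close> to be proportional, and three matrices \<open>c \<otimes> B1\<close> with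
  \<open>c \<in> \<complex>\<^sup>2\<close> are dependent.\<close>

lemma tensor_triple_left_proportional:
  fixes a1 a2 a3 :: "bool \<Rightarrow> complex" and B1 B2 B3 :: "'m \<Rightarrow> complex"
  assumes indep: "lin_indep3 (\<lambda>i m. a1 i * B1 m) (\<lambda>i m. a2 i * B2 m) (\<lambda>i m. a3 i * B3 m)"
    and r12: "rank_le_one (\<lambda>i m. a1 i * B1 m + a2 i * B2 m)"
    and r13: "rank_le_one (\<lambda>i m. a1 i * B1 m + a3 i * B3 m)"
    and r23: "rank_le_one (\<lambda>i m. a2 i * B2 m + a3 i * B3 m)"
  shows "proportional a1 a2"
proof (rule ccontr)
  assume a12: "\<not> proportional a1 a2"
  obtain m1 where B1: "B1 m1 \<noteq> 0"
    using lin_indep3_nonzero(1)[OF indep] by auto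
  obtain m2 where B2: "B2 m2 \<noteq> 0"
    using lin_indep3_nonzero(2)[OF indep] by auto
  obtain i3 where a3: "a3 i3 \<noteq> 0"
    using lin_indep3_nonzero(3)[OF indep] by auto
  have B12: "proportional B1 B2"
    using rank_le_one_tensor_sum[OF a12 r12] .
  have "proportional B1 B3 \<or> proportional B2 B3"
  proof (rule ccontr)
    assume "\<not> (proportional B1 B3 \<or> proportional B2 B3)"
    then have "proportional a1 a3" "proportional a2 a3"
      using rank_le_one_tensor_sum[OF _ r13] rank_le_one_tensor_sum[OF _ r23] by blast+
    then have "proportional a1 a2"
      using proportional_trans[of a1 a3 a2 i3] proportional_sym a3 by blast
    then show False
      using a12 by blast
  qed
  then have B13: "proportional B1 B3"
    using proportional_trans[OF B12 _ B2] by blast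
  define s2 where "s2 = B2 m1 / B1 m1"
  define s3 where "s3 = B3 m1 / B1 m1"
  have B2_eq: "B2 = (\<lambda>m. s2 * B1 m)"
    unfolding s2_def using proportional_scalar[OF B12 B1] .
  have B3_eq: "B3 = (\<lambda>m. s3 * B1 m)"
    unfolding s3_def using proportional_scalar[OF B13 B1] .
  have "s2 \<noteq> 0"
    using B2 unfolding B2_eq by auto
  define c2 where "c2 = (\<lambda>i. s2 * a2 i)"
  define c3 where "c3 = (\<lambda>i. s3 * a3 i)"
  have "det2 a1 c2 = s2 * det2 a1 a2"
    unfolding c2_def det2_def by (simp add: algebra_simps)
  then have d: "det2 a1 c2 \<noteq> 0"
    using a12 \<open>s2 \<noteq> 0\<close> by (simp add: proportional_iff_det2)
  have "det2 c3 c2 * (a1 i * B1 m) + det2 a1 c3 * (a2 i * B2 m) + (- det2 a1 c2) * (a3 i * B3 m)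
      = (det2 c3 c2 * a1 i + det2 a1 c3 * c2 i - det2 a1 c2 * c3 i) * B1 m" for i m
    unfolding B2_eq B3_eq by (simp add: c2_def c3_def algebra_simps)
  then have "det2 c3 c2 * (a1 i * B1 m) + det2 a1 c3 * (a2 i * B2 m) + (- det2 a1 c2) * (a3 i * B3 m) = 0"
    for i m
    using det2_cramer[of c3 c2 a1 i] by simp
  then have "- det2 a1 c2 = 0"
    using indep unfolding lin_indep3_def by blast
  then show False
    using d by simp
qed

lemma rank_le_one_span3_common_factor:
  fixes X Y Z :: "bool \<Rightarrow> 'm \<Rightarrow> complex"
  assumes rank: "\<And>\<alpha> \<beta> \<gamma>. rank_le_one (\<lambda>i m. \<alpha> * X i m + \<beta> * Y i m + \<gamma> * Z i m)"
    and indep: "lin_indep3 X Y Z"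
  obtains a BX BY BZ
  where "X = (\<lambda>i m. a i * BX m)" "Y = (\<lambda>i m. a i * BY m)" "Z = (\<lambda>i m. a i * BZ m)"
proof -
  obtain a1 B1 where X: "X = (\<lambda>i m. a1 i * B1 m)"
    using rank[of 1 0 0] unfolding rank_le_one_def by auto
  obtain a2 B2 where Y: "Y = (\<lambda>i m. a2 i * B2 m)"
    using rank[of 0 1 0] unfolding rank_le_one_def by auto
  obtain a3 B3 where Z: "Z = (\<lambda>i m. a3 i * B3 m)"
    using rank[of 0 0 1] unfolding rank_le_one_def by auto
  have XY: "rank_le_one (\<lambda>i m. a1 i * B1 m + a2 i * B2 m)"
    and XZ: "rank_le_one (\<lambda>i m. a1 i * B1 m + a3 i * B3 m)"
    and YZ: "rank_le_one (\<lambda>i m. a2 i * B2 m + a3 i * B3 m)"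
    and ZY: "rank_le_one (\<lambda>i m. a3 i * B3 m + a2 i * B2 m)"
    using rank[of 1 1 0] rank[of 1 0 1] rank[of 0 1 1] unfolding X Y Z by (simp_all add: add.commute)
  have indep': "lin_indep3 (\<lambda>i m. a1 i * B1 m) (\<lambda>i m. a2 i * B2 m) (\<lambda>i m. a3 i * B3 m)"
    using indep unfolding X Y Z .
  have "proportional a1 a2"
    using tensor_triple_left_proportional[OF indep' XY XZ YZ] .
  moreover have "proportional a1 a3"
    using tensor_triple_left_proportional[OF lin_indep3_swap23[OF indep'] XZ XY ZY] .
  obtain i0 where "a1 i0 \<noteq> 0"
    using lin_indep3_nonzero(1)[OF indep] unfolding X by auto
  define t2 where "t2 = a2 i0 / a1 i0"
  define t3 where "t3 = a3 i0 / a1 i0"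
  have "a2 = (\<lambda>i. t2 * a1 i)" "a3 = (\<lambda>i. t3 * a1 i)"
    unfolding t2_def t3_def
    using proportional_scalar[OF \<open>proportional a1 a2\<close> \<open>a1 i0 \<noteq> 0\<close>]
      proportional_scalar[OF \<open>proportional a1 a3\<close> \<open>a1 i0 \<noteq> 0\<close>] by simp_all
  then have "Y = (\<lambda>i m. a1 i * (t2 * B2 m))" "Z = (\<lambda>i m. a1 i * (t3 * B3 m))"
    unfolding Y Z by (simp_all add: algebra_simps)
  then show ?thesis
    using that[of a1 B1 "\<lambda>m. t2 * B2 m" "\<lambda>m. t3 * B3 m"] X by blast
qed

section \<open>Subspaces of states that are product across every cut\<close>

fun matricize :: "bipartition \<Rightarrow> qstate \<Rightarrow> bool \<Rightarrow> bool \<times> bool \<Rightarrow> complex" where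
  "matricize A_BC v i (j, k) = v i j k"
| "matricize B_AC v j (i, k) = v i j k"
| "matricize C_AB v k (i, j) = v i j k"

lemma rank_le_one_matricize:
  assumes "product_wrt p v"
  shows "rank_le_one (matricize p v)"
proof (cases p)
  case A_BC
  then obtain a b where "\<forall>i j k. v i j k = a i * b j k"
    using assms by auto
  then have "matricize p v = (\<lambda>i m. a i * (case m of (j, k) \<Rightarrow> b j k))"
    using A_BC by (auto simp: fun_eq_iff)
  then show ?thesis
    unfolding rank_le_one_def by blast
next
  case B_AC
  then obtain a b where "\<forall>i j k. v i j k = a j * b i k"
    using assms by auto
  then have "matricize p v = (\<lambda>j m. a j * (case m of (i, k) \<Rightarrow> b i k))"
    using B_AC by (auto simp: fun_eq_iff)
  then show ?thesis
    unfolding rank_le_one_def by blast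
next
  case C_AB
  then obtain a b where "\<forall>i j k. v i j k = a k * b i j"
    using assms by auto
  then have "matricize p v = (\<lambda>k m. a k * (case m of (i, j) \<Rightarrow> b i j))"
    using C_AB by (auto simp: fun_eq_iff)
  then show ?thesis
    unfolding rank_le_one_def by blast
qed

lemma matricize_lincomb3:
  "matricize p (\<lambda>i j k. \<alpha> * x i j k + \<beta> * y i j k + \<gamma> * z i j k) =
     (\<lambda>r m. \<alpha> * matricize p x r m + \<beta> * matricize p y r m + \<gamma> * matricize p z r m)"
  by (cases p) (auto simp: fun_eq_iff)

lemma matricize_eq_zero_iff: "matricize p v = (\<lambda>r m. 0) \<longleftrightarrow> v = (\<lambda>i j k. 0)"
  by (cases p) (auto simp: fun_eq_iff)

lemma orthonormal3_lincomb_eq_0: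
  assumes "orthonormal U" "u1 \<in> U" "u2 \<in> U" "u3 \<in> U" "distinct [u1, u2, u3]"
    and "(\<lambda>i j k. \<alpha> * u1 i j k + \<beta> * u2 i j k + \<gamma> * u3 i j k) = (\<lambda>i j k. 0)"
  shows "\<alpha> = 0 \<and> \<beta> = 0 \<and> \<gamma> = 0"
proof -
  have comb: "hinner u (\<lambda>i j k. \<alpha> * u1 i j k + \<beta> * u2 i j k + \<gamma> * u3 i j k) = 0" for u
    unfolding assms(6) by (simp add: hinner_def)
  have "hinner s t = (if s = t then 1 else 0)" if "s \<in> U" "t \<in> U" for s t
    using assms(1) that unfolding orthonormal_def by auto
  then show ?thesis
    using comb[of u1] comb[of u2] comb[of u3] assms(2-5) by (simp add: hinner_lincomb3_right)
qed

lemma lincomb3_in_cspan: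
  assumes "u1 \<in> U" "u2 \<in> U" "u3 \<in> U" "distinct [u1, u2, u3]"
  shows "(\<lambda>i j k. \<alpha> * u1 i j k + \<beta> * u2 i j k + \<gamma> * u3 i j k) \<in> cspan U"
proof -
  let ?c = "\<lambda>s. if s = u1 then \<alpha> else if s = u2 then \<beta> else \<gamma>"
  have "(\<lambda>i j k. \<alpha> * u1 i j k + \<beta> * u2 i j k + \<gamma> * u3 i j k) =
        (\<lambda>i j k. \<Sum>s\<in>{u1, u2, u3}. ?c s * s i j k)"
    using assms(4) by (simp add: add.assoc eq_commute[of u2 u1] eq_commute[of u3 u1] eq_commute[of u3 u2])
  then show ?thesis
    unfolding cspan_def using assms(1-3)
    by (intro CollectI exI[of _ "{u1, u2, u3}"] exI[of _ ?c]) simp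
qed

lemma lin_indep3_matricize:
  assumes "orthonormal U" "u1 \<in> U" "u2 \<in> U" "u3 \<in> U" "distinct [u1, u2, u3]"
  shows "lin_indep3 (matricize p u1) (matricize p u2) (matricize p u3)"
  unfolding lin_indep3_def
proof (intro allI impI)
  fix \<alpha> \<beta> \<gamma>
  assume "\<forall>r m. \<alpha> * matricize p u1 r m + \<beta> * matricize p u2 r m + \<gamma> * matricize p u3 r m = 0"
  then have "matricize p (\<lambda>i j k. \<alpha> * u1 i j k + \<beta> * u2 i j k + \<gamma> * u3 i j k) = (\<lambda>r m. 0)"
    unfolding matricize_lincomb3 by (simp add: fun_eq_iff)
  then show "\<alpha> = 0 \<and> \<beta> = 0 \<and> \<gamma> = 0"
    using orthonormal3_lincomb_eq_0[OF assms] unfolding matricize_eq_zero_iff by blast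
qed

lemma matricize_factorization:
  assumes "matricize A_BC u = (\<lambda>r m. a r * A m)" "matricize B_AC u = (\<lambda>r m. b r * B m)"
    "matricize C_AB u = (\<lambda>r m. c r * C m)"
  shows "u i j k * (a i0 * b j0 * c k0) = a i * b j * c k * u i0 j0 k0"
    and "u i0 j0 k0 \<noteq> 0 \<Longrightarrow> a i0 * b j0 * c k0 \<noteq> 0"
proof -
  have A: "u i j k = a i * A (j, k)" and B: "u i j k = b j * B (i, k)" and C: "u i j k = c k * C (i, j)"
    for i j k
    using assms(1)[THEN fun_cong, THEN fun_cong, of i "(j, k)"]
      assms(2)[THEN fun_cong, THEN fun_cong, of j "(i, k)"]
      assms(3)[THEN fun_cong, THEN fun_cong, of k "(i, j)"] by simp_all
  have "u i j k * a i0 = a i * u i0 j k"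
    unfolding A[of i j k] A[of i0 j k] by (simp add: ac_simps)
  moreover have "u i0 j k * b j0 = b j * u i0 j0 k"
    unfolding B[of i0 j k] B[of i0 j0 k] by (simp add: ac_simps)
  moreover have "u i0 j0 k * c k0 = c k * u i0 j0 k0"
    unfolding C[of i0 j0 k] C[of i0 j0 k0] by (simp add: ac_simps)
  ultimately show "u i j k * (a i0 * b j0 * c k0) = a i * b j * c k * u i0 j0 k0"
    by (metis mult.assoc mult.commute)
  show "u i0 j0 k0 \<noteq> 0 \<Longrightarrow> a i0 * b j0 * c k0 \<noteq> 0"
    using A[of i0 j0 k0] B[of i0 j0 k0] C[of i0 j0 k0] by auto
qed

lemma matricize_common_factors_proportional:
  assumes "matricize A_BC u = (\<lambda>r m. a r * A m)" "matricize B_AC u = (\<lambda>r m. b r * B m)"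
    "matricize C_AB u = (\<lambda>r m. c r * C m)"
    and "matricize A_BC u' = (\<lambda>r m. a r * A' m)" "matricize B_AC u' = (\<lambda>r m. b r * B' m)"
    "matricize C_AB u' = (\<lambda>r m. c r * C' m)"
    and "u i0 j0 k0 \<noteq> 0"
  shows "u' i0 j0 k0 * u i j k = u i0 j0 k0 * u' i j k"
proof -
  let ?d = "a i0 * b j0 * c k0"
  have "?d \<noteq> 0"
    using matricize_factorization(2)[OF assms(1-3,7)] .
  moreover have "(u' i0 j0 k0 * u i j k) * ?d = (u i0 j0 k0 * u' i j k) * ?d"
    using matricize_factorization(1)[OF assms(1-3), of i j k i0 j0 k0]
      matricize_factorization(1)[OF assms(4-6), of i j k i0 j0 k0]
    by (simp add: ac_simps)
  ultimately show ?thesis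
    by simp
qed

text \<open>A three-dimensional space of vectors that are product across every bipartition
  would consist of multiples of a single \<open>a \<otimes> b \<otimes> c\<close>.\<close>

lemma card_le_2_if_cspan_fully_product:
  assumes on: "orthonormal U" and prod: "\<And>v p. v \<in> cspan U \<Longrightarrow> product_wrt p v"
  shows "card U \<le> 2"
proof (rule ccontr)
  assume "\<not> card U \<le> 2"
  then obtain V where "V \<subseteq> U" "card V = 3"
    using obtain_subset_with_card_n[of 3 U] by auto
  then obtain u1 u2 u3 where u: "u1 \<in> U" "u2 \<in> U" "u3 \<in> U" "distinct [u1, u2, u3]"
    unfolding card_3_iff by auto
  have rank: "rank_le_one (\<lambda>r m. \<alpha> * matricize p u1 r m + \<beta> * matricize p u2 r m + \<gamma> * matricize p u3 r m)"
    for p \<alpha> \<beta> \<gamma>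
    using rank_le_one_matricize[OF prod[OF lincomb3_in_cspan[OF u]]] unfolding matricize_lincomb3 .
  note common_factor = rank_le_one_span3_common_factor[OF rank lin_indep3_matricize[OF on u]]
  obtain a A1 A2 and A3 :: "bool \<times> bool \<Rightarrow> complex"
    where A: "matricize A_BC u1 = (\<lambda>r m. a r * A1 m)" "matricize A_BC u2 = (\<lambda>r m. a r * A2 m)"
    by (rule common_factor)
  obtain b B1 B2 and B3 :: "bool \<times> bool \<Rightarrow> complex"
    where B: "matricize B_AC u1 = (\<lambda>r m. b r * B1 m)" "matricize B_AC u2 = (\<lambda>r m. b r * B2 m)"
    by (rule common_factor)
  obtain c C1 C2 and C3 :: "bool \<times> bool \<Rightarrow> complex"
    where C: "matricize C_AB u1 = (\<lambda>r m. c r * C1 m)" "matricize C_AB u2 = (\<lambda>r m. c r * C2 m)"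
    by (rule common_factor)
  have "u1 \<noteq> (\<lambda>i j k. 0)"
    using on u(1) unfolding orthonormal_def by (auto simp: hinner_def)
  then obtain i0 j0 k0 where x0: "u1 i0 j0 k0 \<noteq> 0"
    by (meson ext)
  have "(\<lambda>i j k. u2 i0 j0 k0 * u1 i j k + (- u1 i0 j0 k0) * u2 i j k + 0 * u3 i j k) = (\<lambda>i j k. 0)"
    using matricize_common_factors_proportional[OF A(1) B(1) C(1) A(2) B(2) C(2) x0]
    by (simp add: fun_eq_iff)
  then show False
    using orthonormal3_lincomb_eq_0[OF on u, of "u2 i0 j0 k0" "- u1 i0 j0 k0" 0] x0 by simp
qed

lemma UEB_orthonormal: "UEB_every_bipartition S \<Longrightarrow> orthonormal S"
  unfolding UEB_every_bipartition_def orthonormal_def genuinely_entangled_def pure_state_def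
  by blast

lemma product_wrt_scale:
  assumes "product_wrt p v"
  shows "product_wrt p (\<lambda>i j k. c * v i j k)"
proof (cases p)
  case A_BC
  then obtain a b where "\<forall>i j k. v i j k = a i * b j k"
    using assms by auto
  then show ?thesis
    using A_BC by (auto intro!: exI[of _ "\<lambda>x. c * a x"])
next
  case B_AC
  then obtain a b where "\<forall>i j k. v i j k = a j * b i k"
    using assms by auto
  then show ?thesis
    using B_AC by (auto intro!: exI[of _ "\<lambda>x. c * a x"])
next
  case C_AB
  then obtain a b where "\<forall>i j k. v i j k = a k * b i j"
    using assms by auto
  then show ?thesis
    using C_AB by (auto intro!: exI[of _ "\<lambda>x. c * a x"])
qed

lemma product_wrt_zero: "product_wrt p (\<lambda>i j k. 0)"
  by (cases p) (auto intro!: exI[of _ "\<lambda>x. 0"])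

text \<open>The hypothesis only speaks about unit vectors of the complement; rescaling
  extends it to the whole complement.\<close>

lemma UEB_orth_compl_product:
  assumes "UEB_every_bipartition S" "w \<in> orth_compl (cspan S)"
  shows "product_wrt p w"
proof (cases "w = (\<lambda>i j k. 0)")
  case True
  then show ?thesis
    using product_wrt_zero by simp
next
  case False
  have "pure_state (normalize_state w)"
    unfolding pure_state_def using hinner_normalize_state_self[OF False] .
  moreover have "normalize_state w \<in> orth_compl (cspan S)"
    using assms(2) unfolding orth_compl_cspan_iff hinner_normalize_state_right by simp
  ultimately have "product_wrt p (normalize_state w)"
    using assms(1) unfolding UEB_every_bipartition_def by blast
  then have "product_wrt p (\<lambda>i j k. complex_of_real (sqrt (sq_norm w)) * normalize_state w i j k)"
    by (rule product_wrt_scale)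
  moreover have "sq_norm w \<noteq> 0"
    using False sq_norm_eq_0_iff by blast
  ultimately show ?thesis
    using sq_norm_nonneg[of w] by (simp add: normalize_state_def)
qed

lemma UEB_every_bipartition_card:
  assumes ueb: "UEB_every_bipartition S"
  shows "finite S \<and> card S \<in> {6, 7}"
proof -
  have on: "orthonormal S" and fin: "finite S"
    using UEB_orthonormal[OF ueb] orthonormal_finite by blast+
  obtain T where T: "S \<subseteq> T" "orthonormal T" "finite T" "card T = 8"
    using orthonormal_extend_to_8[OF on fin] by metis
  have card_diff: "card (T - S) = 8 - card S"
    using T(1,3,4) fin by (simp add: card_Diff_subset)
  have "\<forall>s\<in>S. \<forall>u\<in>T - S. hinner s u = 0"
    using T(1,2) unfolding orthonormal_def by (metis Diff_iff subsetD)
  then have "cspan (T - S) \<subseteq> orth_compl (cspan S)"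
    by (rule cspan_subset_orth_compl_cspan)
  then have "card (T - S) \<le> 2"
    using card_le_2_if_cspan_fully_product[OF orthonormal_subset[OF T(2)]] UEB_orth_compl_product[OF ueb]
    by blast
  moreover have "card S \<noteq> 8"
    using ueb cspan_eq_UNIV_iff_card_8[OF on fin] unfolding UEB_every_bipartition_def by blast
  moreover have "card S \<le> 8"
    using orthonormal_card_le_8[OF on fin] .
  ultimately show ?thesis
    using fin card_diff by auto
qed

section \<open>Examples of sizes six and seven\<close>

lemma product_wrt_if_vanishes_off_00:
  assumes "\<And>i j k. i \<or> j \<Longrightarrow> v i j k = 0"
  shows "product_wrt p v"
proof (cases p)
  case A_BC
  show ?thesis
    unfolding A_BC product_wrt.simps
    by (intro exI[of _ "\<lambda>i. if i then 0 else 1"] exI[of _ "\<lambda>j k. v False j k"]) (use assms in auto)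
next
  case B_AC
  show ?thesis
    unfolding B_AC product_wrt.simps
    by (intro exI[of _ "\<lambda>j. if j then 0 else 1"] exI[of _ "\<lambda>i k. v i False k"]) (use assms in auto)
next
  case C_AB
  show ?thesis
    unfolding C_AB product_wrt.simps
    by (intro exI[of _ "\<lambda>k. v False False k"] exI[of _ "\<lambda>i j. if i \<or> j then 0 else 1"]) (use assms in auto)
qed

lemma genuinely_entangledI:
  assumes "pure_state v" "\<not> minors_vanish (matricize A_BC v)" "\<not> minors_vanish (matricize B_AC v)"
    "\<not> minors_vanish (matricize C_AB v)"
  shows "genuinely_entangled v"
  unfolding genuinely_entangled_def
proof (intro conjI allI notI)
  fix p
  assume "product_wrt p v"
  then have "minors_vanish (matricize p v)"
    by (intro rank_le_one_minors_vanish rank_le_one_matricize)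
  then show False
    using assms(2-4) by (cases p) auto
qed (rule assms(1))

lemma UEB_every_bipartition_of_list:
  fixes P :: "(bool \<times> bool \<times> bool) set"
  assumes ent: "\<forall>s\<in>set xs. genuinely_entangled s"
    and orth: "sorted_wrt (\<lambda>s t. hinner s t = 0) xs"
    and vanish: "P \<subseteq> {(a, b, c). \<forall>s\<in>set xs. s a b c = 0}"
    and P: "P \<noteq> {}" "P \<subseteq> {(False, False, False), (False, False, True)}"
    and card: "length xs + card P = 8"
  shows "UEB_every_bipartition (set xs) \<and> card (set xs) = length xs"
proof -
  have "distinct xs" and on: "orthonormal (set xs)"
    using distinct_orthonormal_list[OF _ orth] ent unfolding genuinely_entangled_def pure_state_def by auto
  then have card_xs: "card (set xs) = length xs"
    by (simp add: distinct_card)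
  have "card P \<noteq> 0"
    using P(1) by (simp add: card_eq_0_iff)
  then have "card (set xs) \<noteq> 8"
    using card card_xs by linarith
  then have "cspan (set xs) \<noteq> UNIV"
    using cspan_eq_UNIV_iff_card_8[OF on] by simp
  moreover have "product_wrt p v" if "v \<in> orth_compl (cspan (set xs))" for p v
  proof (rule product_wrt_if_vanishes_off_00)
    fix i j k :: bool
    assume "i \<or> j"
    then have "(i, j, k) \<notin> P"
      using P(2) by auto
    then show "v i j k = 0"
      using orth_compl_vanishes_off_kets[OF on _ _ vanish that] card card_xs by simp
  qed
  ultimately show ?thesis
    using ent on card_xs unfolding UEB_every_bipartition_def orthonormal_def by blast
qed

text \<open>The amplitude of \<open>|ijk\<rangle>\<close> is half the list entry at the binary index \<open>ijk\<close>.\<close>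

definition half_int_state :: "int list \<Rightarrow> qstate" where
  "half_int_state xs i j k = of_int (xs ! (4 * of_bool i + 2 * of_bool j + of_bool k)) / 2"

definition ueb7 :: "qstate list" where
  "ueb7 = map half_int_state
     [[0, 1, 1, 1, 1, 0, 0, 0], [0, 1, -1, 0, 0, 1, 1, 0], [0, 1, 0, -1, 0, 0, -1, 1],
      [0, 1, 0, 0, -1, -1, 0, -1], [0, 0, 1, -1, 0, 1, 0, -1], [0, 0, 1, 0, -1, 0, 1, 1],
      [0, 0, 0, 1, -1, 1, -1, 0]]"

lemma ueb7_orthogonal: "sorted_wrt (\<lambda>s t. hinner s t = 0) ueb7"
  by (simp add: ueb7_def half_int_state_def hinner_expand)

lemma ueb7_genuinely_entangled: "\<forall>s\<in>set ueb7. genuinely_entangled s"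
  unfolding ueb7_def
  by (auto intro!: genuinely_entangledI
      simp: minors_vanish_def half_int_state_def pure_state_def hinner_expand all_bool_eq)

lemma UEB_every_bipartition_ueb7: "UEB_every_bipartition (set ueb7) \<and> card (set ueb7) = 7"
proof -
  have "{(False, False, False)} \<subseteq> {(a, b, c). \<forall>s\<in>set ueb7. s a b c = 0}"
    by (simp add: ueb7_def half_int_state_def)
  from UEB_every_bipartition_of_list[OF ueb7_genuinely_entangled ueb7_orthogonal this]
  show ?thesis
    by (simp add: ueb7_def)
qed

definition ueb6 :: "qstate list" where
  "ueb6 = map half_int_state
     [[0, 0, 1, 1, 1, -1, 0, 0], [0, 0, 1, -1, 1, 1, 0, 0], [0, 0, 1, 0, -1, 0, 1, 1],
      [0, 0, 1, 0, -1, 0, -1, -1], [0, 0, 0, 1, 0, 1, 1, -1], [0, 0, 0, 1, 0, 1, -1, 1]]"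

lemma ueb6_orthogonal: "sorted_wrt (\<lambda>s t. hinner s t = 0) ueb6"
  by (simp add: ueb6_def half_int_state_def hinner_expand)

lemma ueb6_genuinely_entangled: "\<forall>s\<in>set ueb6. genuinely_entangled s"
  unfolding ueb6_def
  by (auto intro!: genuinely_entangledI
      simp: minors_vanish_def half_int_state_def pure_state_def hinner_expand all_bool_eq)

lemma UEB_every_bipartition_ueb6: "UEB_every_bipartition (set ueb6) \<and> card (set ueb6) = 6"
proof -
  have "{(False, False, False), (False, False, True)} \<subseteq> {(a, b, c). \<forall>s\<in>set ueb6. s a b c = 0}"
    by (simp add: ueb6_def half_int_state_def)
  from UEB_every_bipartition_of_list[OF ueb6_genuinely_entangled ueb6_orthogonal this]
  show ?thesis
    by (simp add: ueb6_def)
qed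

theorem proposition5:
  shows "(\<forall>S. UEB_every_bipartition S \<longrightarrow> finite S \<and> card S \<in> {6, 7})
         \<and> (\<exists>S. UEB_every_bipartition S \<and> card S = 6)
         \<and> (\<exists>S. UEB_every_bipartition S \<and> card S = 7)"
  using UEB_every_bipartition_card UEB_every_bipartition_ueb6 UEB_every_bipartition_ueb7 by blast

end
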